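(* For all $n\ge1$, \[a_n(132,\emptyset,\{3\})=a_n(132,\emptyset,\{1,3\})=\sum_{k=1}^{n}(k-1)!\,(n-k)!.\]
   Context: For $n\ge1$, $\mathcal S_n$ is the set of permutations $\pi=\pi_1\cdots\pi_n$ of $[n]$. A bi-vincular pattern of length $k$ is a triple $p=(\sigma,X,Y)$ with $\sigma\in\mathcal S_k$ and $X,Y\subseteq\{0,1,\dots,k\}$. A permutation $\pi\in\mathcal S_n$ contains $p$ if there are indices $1\le i_1<\dots<i_k\le n$ such that $(\pi_{i_1},\dots,\pi_{i_k})$ is order-isomorphic to $\sigma$ and, letting $j_1<\dots<j_k$ be the values $\pi_{i_1},\dots,\pi_{i_k}$ sorted increasingly and setting $i_0=j_0=0$, $i_{k+1}=j_{k+1}=n+1$, one has $i_{x+1}=i_x+1$ for all $x\in X$ and $j_{y+1}=j_y+1$ for all $y\in Y$. Otherwise $\pi$ avoids $p$; $a_n(p)$ is the number of $\pi\in\mathcal S_n$ avoiding $p$. *)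

theory Defs
  imports "HOL-Combinatorics.Multiset_Permutations"
begin

text \<open>Permutations of [n] are lists (one-line notation, 1-based values);
  positions in the paper are 1-based, so entry pi_i is pi ! (i - 1).\<close>

definition contains_bv :: "nat list \<Rightarrow> nat list \<times> nat set \<times> nat set \<Rightarrow> bool" where
  "contains_bv \<pi> p = (case p of (\<sigma>, X, Y) \<Rightarrow>
     (let n = length \<pi>; k = length \<sigma> in
      \<exists>I :: nat \<Rightarrow> nat.
        (\<forall>a\<in>{1..k}. 1 \<le> I a \<and> I a \<le> n) \<and>
        (\<forall>a b. 1 \<le> a \<longrightarrow> a < b \<longrightarrow> b \<le> k \<longrightarrow> I a < I b) \<and>
        (\<forall>a\<in>{1..k}. \<forall>b\<in>{1..k}.
            (\<pi> ! (I a - 1) < \<pi> ! (I b - 1)) \<longleftrightarrow> (\<sigma> ! (a - 1) < \<sigma> ! (b - 1))) \<and>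
        (let ii = (\<lambda>x. if x = 0 then 0 else if x = k + 1 then n + 1 else I x);
             vals = sort (map (\<lambda>a. \<pi> ! (I a - 1)) [1..<k+1]);
             jj = (\<lambda>y. if y = 0 then 0 else if y = k + 1 then n + 1 else vals ! (y - 1))
         in (\<forall>x\<in>X. x \<le> k \<longrightarrow> ii (x + 1) = ii x + 1) \<and>
            (\<forall>y\<in>Y. y \<le> k \<longrightarrow> jj (y + 1) = jj y + 1))))"

definition avoid_count :: "nat \<Rightarrow> nat list \<times> nat set \<times> nat set \<Rightarrow> nat" where
  "avoid_count n p = card {\<pi> \<in> permutations_of_set {1..n}. \<not> contains_bv \<pi> p}"

end

theory Submission imports Defs begin

text \<open>In both patterns the condition 3 \<in> Y forces the entry of an occurrence playing the
  role of 3 to be the maximum n. Conversely any 132 occurrence through n can be moved to one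
  whose 1 and 2 are adjacent values: if the successor of the 1 lies left of n, it becomes the
  new 1. So a permutation avoids either pattern iff it has the form xs n ys with every entry of
  xs above every entry of ys, i.e. xs a permutation of {n-k+1..n-1} and ys of {1..n-k}, where k
  is the position of n; there are (k-1)! (n-k)! of these for each k.\<close>

definition has_132_at_max :: "nat list \<Rightarrow> bool" where
  "has_132_at_max \<pi> \<longleftrightarrow>
     (\<exists>i j l. i < j \<and> j < l \<and> l < length \<pi> \<and> \<pi> ! j = length \<pi> \<and> \<pi> ! i < \<pi> ! l)"

lemma ball_atLeastAtMost_1_3: "(\<forall>a\<in>{1..3::nat}. P a) \<longleftrightarrow> P 1 \<and> P 2 \<and> P 3"
proof -
  have "{1..3::nat} = {1,2,3}" by auto
  then show ?thesis by simp
qed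

lemma all_increasing_pairs_1_3:
  "(\<forall>a b. 1 \<le> a \<longrightarrow> a < b \<longrightarrow> b \<le> (3::nat) \<longrightarrow> P a b) \<longleftrightarrow> P 1 2 \<and> P 1 3 \<and> P 2 3"
proof
  assume P: "P 1 2 \<and> P 1 3 \<and> P 2 3"
  show "\<forall>a b. 1 \<le> a \<longrightarrow> a < b \<longrightarrow> b \<le> (3::nat) \<longrightarrow> P a b"
  proof (intro allI impI)
    fix a b :: nat assume "1 \<le> a" "a < b" "b \<le> 3"
    then have "(a = 1 \<and> b = 2) \<or> (a = 1 \<and> b = 3) \<or> (a = 2 \<and> b = 3)" by arith
    then show "P a b" using P by auto
  qed
qed auto

lemma has_132_at_max_if_contains:
  assumes "contains_bv \<pi> ([1,3,2], {}, Y)" and "3 \<in> Y"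
  shows "has_132_at_max \<pi>"
proof -
  obtain I where range: "\<forall>a\<in>{1..3}. 1 \<le> I a \<and> I a \<le> length \<pi>"
    and mono: "\<forall>a b. 1 \<le> a \<longrightarrow> a < b \<longrightarrow> b \<le> 3 \<longrightarrow> I a < I b"
    and order: "\<forall>a\<in>{1..3}. \<forall>b\<in>{1..3}.
      (\<pi> ! (I a - 1) < \<pi> ! (I b - 1)) \<longleftrightarrow> ([1,3,2::nat] ! (a - 1) < [1,3,2] ! (b - 1))"
    and top: "sort [\<pi> ! (I 1 - 1), \<pi> ! (I 2 - 1), \<pi> ! (I 3 - 1)] ! 2 = length \<pi>"
    using assms unfolding contains_bv_def Let_def
    by (auto simp del: sort_key_simps simp: upt_rec numeral_2_eq_2 numeral_3_eq_3)
  from range mono have idx: "1 \<le> I 1" "I 1 < I 2" "I 2 < I 3" "I 3 \<le> length \<pi>"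
    by (auto simp: ball_atLeastAtMost_1_3 all_increasing_pairs_1_3)
  from order have "\<pi> ! (I 1 - 1) < \<pi> ! (I 3 - 1)" "\<pi> ! (I 3 - 1) < \<pi> ! (I 2 - 1)"
    by (auto simp: ball_atLeastAtMost_1_3)
  moreover from top this have "\<pi> ! (I 2 - 1) = length \<pi>" by simp
  ultimately show ?thesis
    unfolding has_132_at_max_def
    by (intro exI[of _ "I 1 - 1"] exI[of _ "I 2 - 1"] exI[of _ "I 3 - 1"]) (use idx in auto)
qed

lemma contains_if_adjacent_132_at_max:
  assumes "i < j" "j < l" "l < length \<pi>" "\<pi> ! j = length \<pi>" "\<pi> ! l = \<pi> ! i + 1"
    and "\<pi> ! l < length \<pi>" and "Y \<subseteq> {1,3}"
  shows "contains_bv \<pi> ([1,3,2], {}, Y)"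
proof -
  define I where "I = (\<lambda>a::nat. if a = 1 then i + 1 else if a = 2 then j + 1 else l + 1)"
  have "map (\<lambda>a. \<pi> ! (I a - 1)) [1..<3+1] = [\<pi> ! i, \<pi> ! j, \<pi> ! l]"
    by (simp add: I_def upt_rec)
  then have vals: "sort (map (\<lambda>a. \<pi> ! (I a - 1)) [1..<3+1]) = [\<pi> ! i, \<pi> ! i + 1, length \<pi>]"
    using assms(4-6) by simp
  show ?thesis
    unfolding contains_bv_def Let_def prod.case vals
    using assms by (intro exI[of _ I] conjI)
      (auto simp: ball_atLeastAtMost_1_3 all_increasing_pairs_1_3 I_def)
qed

lemma adjacent_132_at_max:
  assumes perm: "set \<pi> = {1..length \<pi>}" "distinct \<pi>"
    and "\<pi> ! j = length \<pi>" "j < l" "l < length \<pi>"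
  shows "i < j \<Longrightarrow> \<pi> ! i < \<pi> ! l \<Longrightarrow>
    \<exists>i' l'. i' < j \<and> j < l' \<and> l' < length \<pi> \<and> \<pi> ! l' = \<pi> ! i' + 1"
proof (induction "\<pi> ! l - \<pi> ! i" arbitrary: i rule: less_induct)
  case less
  have "\<pi> ! l \<in> set \<pi>" using assms(5) by (rule nth_mem)
  moreover have "\<pi> ! l \<noteq> \<pi> ! j"
    using nth_eq_iff_index_eq[OF perm(2)] assms(4,5) by simp
  ultimately have "\<pi> ! i + 1 < length \<pi>" using perm(1) assms(3) less.prems(2) by auto
  then obtain q where q: "q < length \<pi>" "\<pi> ! q = \<pi> ! i + 1"
    using perm(1) by (metis atLeastAtMost_iff in_set_conv_nth le_add2 less_imp_le_nat)
  then have "q \<noteq> j" using assms(3) \<open>\<pi> ! i + 1 < length \<pi>\<close> by auto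
  show ?case
  proof (cases "j < q")
    case True
    then show ?thesis using less.prems(1) q by blast
  next
    case False
    with \<open>q \<noteq> j\<close> have "q < j" by simp
    then have "\<pi> ! q \<noteq> \<pi> ! l"
      using perm(2) assms(4,5) q(1) nth_eq_iff_index_eq by fastforce
    then have "\<pi> ! q < \<pi> ! l" using q(2) less.prems(2) by simp
    then show ?thesis using less.hyps[of q] q(2) \<open>q < j\<close> by simp
  qed
qed

lemma contains_132_iff_has_132_at_max:
  assumes "set \<pi> = {1..length \<pi>}" "distinct \<pi>" and "3 \<in> Y" "Y \<subseteq> {1,3}"
  shows "contains_bv \<pi> ([1,3,2], {}, Y) \<longleftrightarrow> has_132_at_max \<pi>"
proof
  assume "has_132_at_max \<pi>"
  then obtain i j l where occ: "i < j" "j < l" "l < length \<pi>" "\<pi> ! j = length \<pi>" "\<pi> ! i < \<pi> ! l"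
    unfolding has_132_at_max_def by blast
  obtain i' l' where adj: "i' < j" "j < l'" "l' < length \<pi>" "\<pi> ! l' = \<pi> ! i' + 1"
    using adjacent_132_at_max[OF assms(1,2) occ(4,2,3) occ(1,5)] by blast
  have "\<pi> ! l' \<in> set \<pi>" using adj(3) by (rule nth_mem)
  moreover have "\<pi> ! l' \<noteq> \<pi> ! j"
    using nth_eq_iff_index_eq[OF assms(2)] adj(2,3) by simp
  ultimately have "\<pi> ! l' < length \<pi>" using assms(1) occ(4) by auto
  then show "contains_bv \<pi> ([1,3,2], {}, Y)"
    using contains_if_adjacent_132_at_max[OF adj(1-3) occ(4) adj(4)] assms(4) by blast
qed (use has_132_at_max_if_contains assms(3) in blast)

lemma has_132_at_max_split_iff:
  assumes "distinct (xs @ n # ys)" "n = length (xs @ n # ys)"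
  shows "has_132_at_max (xs @ n # ys) \<longleftrightarrow> (\<exists>x\<in>set xs. \<exists>y\<in>set ys. x < y)"
proof
  let ?\<pi> = "xs @ n # ys"
  assume "has_132_at_max ?\<pi>"
  then obtain i j l where occ: "i < j" "j < l" "l < length ?\<pi>" "?\<pi> ! j = n" "?\<pi> ! i < ?\<pi> ! l"
    unfolding has_132_at_max_def using assms(2) by metis
  have "?\<pi> ! length xs = n" by simp
  then have "j = length xs"
    using occ(2-4) assms(1) nth_eq_iff_index_eq[of ?\<pi> j "length xs"] by simp
  then have "?\<pi> ! i \<in> set xs" "?\<pi> ! l \<in> set ys"
    using occ(1-3) by (simp_all add: nth_append nth_Cons')
  then show "\<exists>x\<in>set xs. \<exists>y\<in>set ys. x < y" using occ(5) by blast
next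
  let ?\<pi> = "xs @ n # ys"
  assume "\<exists>x\<in>set xs. \<exists>y\<in>set ys. x < y"
  then obtain i t where "i < length xs" "t < length ys" "xs ! i < ys ! t"
    by (auto simp: in_set_conv_nth)
  then show "has_132_at_max ?\<pi>"
    unfolding has_132_at_max_def using assms(2)
    by (intro exI[of _ i] exI[of _ "length xs"] exI[of _ "length xs + 1 + t"])
      (simp add: nth_append)
qed

lemma lower_part_eq_initial_segment:
  assumes "A \<union> B = {1..m}" and below: "\<forall>a\<in>A. \<forall>b\<in>B. b < (a::nat)"
  shows "B = {1..card B}"
proof -
  have "B \<subseteq> {1..m}" using assms(1) by auto
  then have fin: "finite B" and "card B \<le> m"
    using finite_subset card_mono[of "{1..m}" B] by auto
  have "{1..card B} \<subseteq> B"
  proof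
    fix v assume v: "v \<in> {1..card B}"
    show "v \<in> B"
    proof (rule ccontr)
      assume "v \<notin> B"
      with v \<open>card B \<le> m\<close> assms(1) have "v \<in> A" by auto
      with below \<open>B \<subseteq> {1..m}\<close> have "B \<subseteq> {1..<v}" by fastforce
      then have "card B \<le> v - 1" using card_mono[of "{1..<v}" B] by simp
      then show False using v by auto
    qed
  qed
  then show ?thesis by (metis card_atLeastAtMost card_subset_eq[OF fin] diff_Suc_1)
qed

definition max_split_perms :: "nat \<Rightarrow> nat \<Rightarrow> nat list set" where
  "max_split_perms n k = (\<lambda>(xs, ys). xs @ n # ys) `
     (permutations_of_set {n-k+1..n-1} \<times> permutations_of_set {1..n-k})"

lemma mem_max_split_perms_iff:
  "\<pi> \<in> max_split_perms n k \<longleftrightarrow> (\<exists>xs ys. \<pi> = xs @ n # ys \<and>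
     xs \<in> permutations_of_set {n-k+1..n-1} \<and> ys \<in> permutations_of_set {1..n-k})"
  unfolding max_split_perms_def by force

lemma max_not_in_split_parts:
  fixes n k :: nat
  assumes "k \<in> {1..n}"
    and "xs \<in> permutations_of_set {n-k+1..n-1}" "ys \<in> permutations_of_set {1..n-k}"
  shows "n \<notin> set xs" "n \<notin> set ys"
  using assms by (auto dest!: permutations_of_setD(1))

lemma max_split_perms_avoid:
  assumes "k \<in> {1..n}" and "\<pi> \<in> max_split_perms n k"
  shows "\<pi> \<in> permutations_of_set {1..n}" "\<not> has_132_at_max \<pi>"
proof -
  obtain xs ys where \<pi>: "\<pi> = xs @ n # ys"
    and xs: "xs \<in> permutations_of_set {n-k+1..n-1}" and ys: "ys \<in> permutations_of_set {1..n-k}"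
    using assms(2) unfolding mem_max_split_perms_iff by blast
  have k: "1 \<le> k" "k \<le> n" using assms(1) by simp_all
  note sets = permutations_of_setD(1)[OF xs] permutations_of_setD(1)[OF ys]
  have "set \<pi> = {1..n}" using sets k \<pi> by auto
  moreover have "distinct \<pi>"
    using \<pi> permutations_of_setD(2)[OF xs] permutations_of_setD(2)[OF ys]
      max_not_in_split_parts[OF assms(1) xs ys] sets k by auto
  ultimately show perm: "\<pi> \<in> permutations_of_set {1..n}" by blast
  have "n = length \<pi>" using length_finite_permutations_of_set[OF perm] by simp
  then show "\<not> has_132_at_max \<pi>"
    using has_132_at_max_split_iff \<open>distinct \<pi>\<close> sets \<pi> by auto
qed

lemma avoider_in_max_split_perms:
  assumes perm: "\<pi> \<in> permutations_of_set {1..n}" and avoid: "\<not> has_132_at_max \<pi>"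
    and "n \<ge> 1"
  shows "\<exists>k\<in>{1..n}. \<pi> \<in> max_split_perms n k"
proof -
  have len: "length \<pi> = n" using length_finite_permutations_of_set[OF perm] by simp
  have "n \<in> set \<pi>" using permutations_of_setD(1)[OF perm] \<open>n \<ge> 1\<close> by simp
  then obtain xs ys where \<pi>: "\<pi> = xs @ n # ys" by (meson split_list)
  have dist: "distinct (xs @ n # ys)" using permutations_of_setD(2)[OF perm] \<pi> by simp
  have "\<not> (\<exists>x\<in>set xs. \<exists>y\<in>set ys. x < y)"
    using avoid has_132_at_max_split_iff[OF dist] len \<pi> by simp
  moreover have disj: "set xs \<inter> set ys = {}" using dist by auto
  ultimately have below: "\<forall>x\<in>set xs. \<forall>y\<in>set ys. y < x"
    by (metis disjoint_iff linorder_neqE_nat)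
  have "set xs \<union> set ys = {1..n} - {n}"
    using permutations_of_setD(1)[OF perm] \<pi> dist by auto
  also have "\<dots> = {1..n-1}" by auto
  finally have parts: "set xs \<union> set ys = {1..n-1}" .
  define k where "k = length xs + 1"
  have len_ys: "length ys = n - k" using len \<pi> k_def by simp
  have ys: "set ys = {1..n-k}"
    using lower_part_eq_initial_segment[OF parts below] distinct_card[of ys] dist len_ys by simp
  have "set xs = {1..n-1} - {1..n-k}" using parts ys disj by blast
  also have "\<dots> = {n-k+1..n-1}" by auto
  finally have "set xs = {n-k+1..n-1}" .
  then have "\<pi> \<in> max_split_perms n k"
    unfolding mem_max_split_perms_iff using \<pi> ys dist by auto
  moreover have "k \<in> {1..n}" using len \<pi> k_def by simp
  ultimately show ?thesis by blast
qed

lemma max_split_eq_iff: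
  fixes n k :: nat
  assumes "k \<in> {1..n}"
    and "xs \<in> permutations_of_set {n-k+1..n-1}" "ys \<in> permutations_of_set {1..n-k}"
  shows "xs @ n # ys = xs' @ n # ys' \<longleftrightarrow> xs = xs' \<and> ys = ys'"
  using assms max_not_in_split_parts[of k n xs ys] append_Cons_eq_iff by simp

lemma card_max_split_perms:
  assumes "k \<in> {1..n}"
  shows "card (max_split_perms n k) = fact (k - 1) * fact (n - k)"
proof -
  have "inj_on (\<lambda>(xs, ys). xs @ n # ys)
      (permutations_of_set {n-k+1..n-1} \<times> permutations_of_set {1..n-k})"
  proof (rule inj_onI, clarify)
    fix xs ys xs' ys'
    assume xs: "xs \<in> permutations_of_set {n-k+1..n-1}" and ys: "ys \<in> permutations_of_set {1..n-k}"
      and "xs' \<in> permutations_of_set {n-k+1..n-1}" "ys' \<in> permutations_of_set {1..n-k}"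
      and "xs @ n # ys = xs' @ n # ys'"
    then show "xs = xs' \<and> ys = ys'" using max_split_eq_iff[OF assms xs ys] by simp
  qed
  moreover have "card {n-k+1..n-1} = k - 1" using assms by simp
  ultimately show ?thesis
    unfolding max_split_perms_def by (simp add: card_image card_cartesian_product)
qed

lemma max_split_perms_disjoint:
  assumes k: "k \<in> {1..n}" and k': "k' \<in> {1..n}" and "k \<noteq> k'"
  shows "max_split_perms n k \<inter> max_split_perms n k' = {}"
proof (rule ccontr)
  assume "max_split_perms n k \<inter> max_split_perms n k' \<noteq> {}"
  then obtain \<pi> where "\<pi> \<in> max_split_perms n k" "\<pi> \<in> max_split_perms n k'" by blast
  then obtain xs ys xs' ys' where "xs @ n # ys = xs' @ n # ys'"
    and xs: "xs \<in> permutations_of_set {n-k+1..n-1}" and ys: "ys \<in> permutations_of_set {1..n-k}"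
    and xs': "xs' \<in> permutations_of_set {n-k'+1..n-1}"
    unfolding mem_max_split_perms_iff by metis
  then have "xs = xs'" using max_split_eq_iff[OF k xs ys] by blast
  then have "k - 1 = k' - 1"
    using length_finite_permutations_of_set[OF xs] length_finite_permutations_of_set[OF xs'] k k'
    by simp
  then show False using k k' \<open>k \<noteq> k'\<close> by auto
qed

lemma avoiders_132_at_max_eq_UN:
  assumes "n \<ge> 1"
  shows "{\<pi> \<in> permutations_of_set {1..n}. \<not> has_132_at_max \<pi>} = (\<Union>k\<in>{1..n}. max_split_perms n k)"
proof (intro equalityI subsetI)
  fix \<pi> assume "\<pi> \<in> {\<pi> \<in> permutations_of_set {1..n}. \<not> has_132_at_max \<pi>}"
  then show "\<pi> \<in> (\<Union>k\<in>{1..n}. max_split_perms n k)"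
    using avoider_in_max_split_perms[OF _ _ assms] by auto
next
  fix \<pi> assume "\<pi> \<in> (\<Union>k\<in>{1..n}. max_split_perms n k)"
  then show "\<pi> \<in> {\<pi> \<in> permutations_of_set {1..n}. \<not> has_132_at_max \<pi>}"
    using max_split_perms_avoid by auto
qed

lemma card_avoiders_132_at_max:
  assumes "n \<ge> 1"
  shows "card {\<pi> \<in> permutations_of_set {1..n}. \<not> has_132_at_max \<pi>}
    = (\<Sum>k=1..n. fact (k - 1) * fact (n - k))"
proof -
  have "card (\<Union>k\<in>{1..n}. max_split_perms n k) = (\<Sum>k=1..n. card (max_split_perms n k))"
  proof (rule card_UN_disjoint)
    show "\<forall>k\<in>{1..n}. finite (max_split_perms n k)" by (simp add: max_split_perms_def)
    show "\<forall>k\<in>{1..n}. \<forall>k'\<in>{1..n}. k \<noteq> k' \<longrightarrow> max_split_perms n k \<inter> max_split_perms n k' = {}"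
      using max_split_perms_disjoint by blast
  qed simp
  also have "\<dots> = (\<Sum>k=1..n. fact (k - 1) * fact (n - k))"
    by (rule sum.cong) (simp_all add: card_max_split_perms)
  finally show ?thesis unfolding avoiders_132_at_max_eq_UN[OF assms] .
qed

lemma avoid_count_132_eq:
  assumes "n \<ge> 1" and "3 \<in> Y" "Y \<subseteq> {1,3}"
  shows "avoid_count n ([1,3,2], {}, Y) = (\<Sum>k=1..n. fact (k - 1) * fact (n - k))"
proof -
  have "{\<pi> \<in> permutations_of_set {1..n}. \<not> contains_bv \<pi> ([1,3,2], {}, Y)}
      = {\<pi> \<in> permutations_of_set {1..n}. \<not> has_132_at_max \<pi>}"
  proof (rule Collect_cong)
    fix \<pi>
    show "(\<pi> \<in> permutations_of_set {1..n} \<and> \<not> contains_bv \<pi> ([1,3,2], {}, Y)) \<longleftrightarrow>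
        (\<pi> \<in> permutations_of_set {1..n} \<and> \<not> has_132_at_max \<pi>)"
      using contains_132_iff_has_132_at_max[OF _ _ assms(2,3)] permutations_of_setD
        length_finite_permutations_of_set by fastforce
  qed
  then show ?thesis unfolding avoid_count_def using card_avoiders_132_at_max[OF assms(1)] by simp
qed

theorem mainTheorem8:
  fixes n :: nat
  assumes "n \<ge> 1"
  shows "avoid_count n ([1,3,2], {}, {3}) = (\<Sum>k=1..n. fact (k - 1) * fact (n - k))
       \<and> avoid_count n ([1,3,2], {}, {1,3}) = (\<Sum>k=1..n. fact (k - 1) * fact (n - k))"
  using avoid_count_132_eq[OF assms] by simp

end
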